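(* Let $A$ be an associative algebra with identity over a field $\mathbf{k}$, let $q\in A$ be an idempotent, and let $k\in\mathbf{k}$ be a fixed scalar. Then the invariant algebra $(A,q)=\{x\in A : qxq=qx\}$ is a Lie algebra under the bracket $$[x,y]_{6,k}:=xy-yx-xyq+yxq+kxqy-kyqx,\qquad x,y\in (A,q).$$
   Context: For an associative algebra $A$ with identity and an idempotent $q\in A$, the (right) invariant algebra induced by $q$ is the set $(A,q):=\{x\in A: qxq=qx\}$; it is an associative subalgebra of $A$ containing $1$ and $q$. *)

theory Defs
  imports Main "HOL.Vector_Spaces"
begin

definition assoc_algebra :: "('k::field \<Rightarrow> 'a::ring_1 \<Rightarrow> 'a) \<Rightarrow> bool" where
  "assoc_algebra scale \<longleftrightarrow> vector_space scale \<and>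
     (\<forall>c x y. scale c x * y = scale c (x * y)) \<and>
     (\<forall>c x y. x * scale c y = scale c (x * y))"

definition invariant_algebra :: "'a::ring_1 \<Rightarrow> 'a set" where
  "invariant_algebra q = {x. q * x * q = q * x}"

definition bracket6 :: "('k::field \<Rightarrow> 'a::ring_1 \<Rightarrow> 'a) \<Rightarrow> 'k \<Rightarrow> 'a \<Rightarrow> 'a \<Rightarrow> 'a \<Rightarrow> 'a" where
  "bracket6 scale k q x y =
     x * y - y * x - x * y * q + y * x * q + scale k (x * q * y) - scale k (y * q * x)"

definition lie_algebra_on ::
  "('k::field \<Rightarrow> 'a::ab_group_add \<Rightarrow> 'a) \<Rightarrow> 'a set \<Rightarrow> ('a \<Rightarrow> 'a \<Rightarrow> 'a) \<Rightarrow> bool" where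
  "lie_algebra_on scale S br \<longleftrightarrow>
     module.subspace scale S \<and>
     (\<forall>x\<in>S. \<forall>y\<in>S. br x y \<in> S) \<and>
     (\<forall>x\<in>S. \<forall>y\<in>S. \<forall>z\<in>S. br (x + y) z = br x z + br y z) \<and>
     (\<forall>x\<in>S. \<forall>y\<in>S. \<forall>z\<in>S. br x (y + z) = br x y + br x z) \<and>
     (\<forall>c. \<forall>x\<in>S. \<forall>y\<in>S. br (scale c x) y = scale c (br x y)) \<and>
     (\<forall>c. \<forall>x\<in>S. \<forall>y\<in>S. br x (scale c y) = scale c (br x y)) \<and>
     (\<forall>x\<in>S. br x x = 0) \<and>
     (\<forall>x\<in>S. \<forall>y\<in>S. \<forall>z\<in>S. br x (br y z) + br y (br z x) + br z (br x y) = 0)"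

end

theory Submission
  imports Defs
begin

(* In an associative algebra the scalar k acts as multiplication by the central
   element K = k*1, so the bracket [x,y]_{6,k} is the commutator  x o y - y o x  of the
   deformed product
       x o y = x y - x y q + K x q y = x y (1 - q) + K x q y.
   Writing p = 1 - q, idempotence gives p q = 0, and z in (A,q) means exactly q z p = 0;
   from these two facts one checks that (x o y) o z = x o (y o z) whenever z lies in (A,q).
   The commutator of a biadditive product that is associative on a set S satisfies the Jacobi
   identity on S, so Jacobi for the bracket follows. *)

definition central :: "'a::ring_1 \<Rightarrow> bool" where
  "central c \<longleftrightarrow> (\<forall>w. w * c = c * w)"

lemma central_commute:
  assumes "central c"
  shows "w * (c * v) = c * (w * v)"
proof -
  have "w * (c * v) = (w * c) * v" by (simp add: mult.assoc)
  also have "\<dots> = c * (w * v)" using assms unfolding central_def by (simp add: mult.assoc)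
  finally show ?thesis .
qed

lemma assoc_algebra_scale_eq:
  assumes "assoc_algebra scale"
  shows "scale c x = scale c 1 * x"
proof -
  have "scale c 1 * x = scale c (1 * x)" using assms unfolding assoc_algebra_def by blast
  then show ?thesis by simp
qed

lemma assoc_algebra_scale_central:
  assumes "assoc_algebra scale"
  shows "central (scale c 1)"
  unfolding central_def
proof
  fix w
  have "w * scale c 1 = scale c w" using assms unfolding assoc_algebra_def by (metis mult_1_right)
  also have "\<dots> = scale c 1 * w" by (rule assoc_algebra_scale_eq[OF assms])
  finally show "w * scale c 1 = scale c 1 * w" .
qed

text \<open>The product whose commutator is the bracket [x,y]_{6,k}, with K in place of k*1.\<close>
definition deformed_mult :: "'a::ring_1 \<Rightarrow> 'a \<Rightarrow> 'a \<Rightarrow> 'a \<Rightarrow> 'a" where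
  "deformed_mult K q x y = x * y - x * y * q + K * (x * q * y)"

lemma bracket6_eq_commutator:
  assumes "assoc_algebra scale"
  shows "bracket6 scale k q x y =
           deformed_mult (scale k 1) q x y - deformed_mult (scale k 1) q y x"
proof -
  have "scale k (x * q * y) = scale k 1 * (x * q * y)" "scale k (y * q * x) = scale k 1 * (y * q * x)"
    by (rule assoc_algebra_scale_eq[OF assms])+
  then show ?thesis unfolding bracket6_def deformed_mult_def by (simp add: algebra_simps)
qed

lemma deformed_mult_diff_left:
  "deformed_mult K q (a - b) c = deformed_mult K q a c - deformed_mult K q b c"
  and deformed_mult_diff_right:
  "deformed_mult K q a (b - c) = deformed_mult K q a b - deformed_mult K q a c"
  and deformed_mult_add_left:
  "deformed_mult K q (a + b) c = deformed_mult K q a c + deformed_mult K q b c"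
  and deformed_mult_add_right:
  "deformed_mult K q a (b + c) = deformed_mult K q a b + deformed_mult K q a c"
  unfolding deformed_mult_def by (simp_all add: algebra_simps)

lemma deformed_mult_central:
  assumes "central C"
  shows "deformed_mult K q (C * x) y = C * deformed_mult K q x y"
    and "deformed_mult K q x (C * y) = C * deformed_mult K q x y"
proof -
  have "x * (C * v) = C * (x * v)" "q * (C * v) = C * (q * v)" "K * (C * v) = C * (K * v)" for v
    using central_commute[OF assms] by simp_all
  then show "deformed_mult K q (C * x) y = C * deformed_mult K q x y"
    and "deformed_mult K q x (C * y) = C * deformed_mult K q x y"
    unfolding deformed_mult_def by (simp_all add: algebra_simps)
qed

lemma deformed_mult_scale:
  assumes "assoc_algebra scale"
  shows "deformed_mult K q (scale c x) y = scale c (deformed_mult K q x y)"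
    and "deformed_mult K q x (scale c y) = scale c (deformed_mult K q x y)"
  unfolding assoc_algebra_scale_eq[OF assms, of c x] assoc_algebra_scale_eq[OF assms, of c y]
    assoc_algebra_scale_eq[OF assms, of c "deformed_mult K q x y"]
  by (rule deformed_mult_central[OF assoc_algebra_scale_central[OF assms]])+

lemma deformed_mult_alt: "deformed_mult K q a b = a * b * (1 - q) + K * (a * q * b)"
  unfolding deformed_mult_def by (simp add: algebra_simps)

text \<open>With p = 1 - q, idempotence gives p q = 0 and p p = p, and
  z in (A,q) gives q z p = 0, hence p z p = z p; both sides then reduce to
  x y z p + K x q y z p + K^2 x q y q z.\<close>
lemma deformed_mult_assoc:
  assumes K: "central K" and idem: "q * q = q" and z: "z \<in> invariant_algebra q"
  shows "deformed_mult K q (deformed_mult K q x y) z = deformed_mult K q x (deformed_mult K q y z)"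
proof -
  define p where "p = 1 - q"
  have pq: "p * q = 0" and pp: "p * p = p" unfolding p_def by (simp_all add: algebra_simps idem)
  have qzp: "q * (z * p) = 0"
    using z unfolding p_def invariant_algebra_def by (simp add: right_diff_distrib mult.assoc)
  have "p * (z * p) = z * p - q * (z * p)" by (simp add: p_def left_diff_distrib)
  then have pzp: "p * (z * p) = z * p" using qzp by (simp add: mult.assoc)
  have Kx: "x * (K * v) = K * (x * v)" and Kq: "q * (K * v) = K * (q * v)" for v
    using central_commute[OF K] by simp_all
  have "deformed_mult K q (deformed_mult K q x y) z
      = (x * y * p + K * (x * q * y)) * z * p + K * ((x * y * p + K * (x * q * y)) * q * z)"
    unfolding deformed_mult_alt p_def ..
  also have "\<dots> = x * y * (p * z * p) + K * (x * q * y * z * p) + K * (x * y * (p * q) * z)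
      + K * K * (x * q * y * q * z)"
    by (simp add: distrib_left distrib_right mult.assoc Kx Kq)
  also have "\<dots> = x * y * z * p + K * (x * q * y * z * p) + K * K * (x * q * y * q * z)"
    by (simp add: pzp pq mult.assoc)
  also have "\<dots> = x * y * z * (p * p) + K * (x * y * (q * z * p)) + K * (x * q * y * z * p)
      + K * K * (x * q * y * q * z)"
    by (simp add: pp qzp mult.assoc)
  also have "\<dots> = x * (y * z * p + K * (y * q * z)) * p + K * (x * q * (y * z * p + K * (y * q * z)))"
    by (simp add: distrib_left distrib_right mult.assoc Kx Kq)
  also have "\<dots> = deformed_mult K q x (deformed_mult K q y z)"
    unfolding deformed_mult_alt p_def ..
  finally show ?thesis .
qed

text \<open>The commutator of a product that distributes over subtraction and is associative whenever
  its right-most factor lies in S satisfies the Jacobi identity on S: after expanding, every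
  triple product occurs twice with opposite signs.\<close>
lemma commutator_jacobi:
  fixes m :: "'a::ab_group_add \<Rightarrow> 'a \<Rightarrow> 'a"
  assumes diff_left: "\<And>a b c. m (a - b) c = m a c - m b c"
    and diff_right: "\<And>a b c. m a (b - c) = m a b - m a c"
    and assoc: "\<And>a b c. c \<in> S \<Longrightarrow> m (m a b) c = m a (m b c)"
    and "x \<in> S" "y \<in> S" "z \<in> S"
  shows "(m x (m y z - m z y) - m (m y z - m z y) x)
       + (m y (m z x - m x z) - m (m z x - m x z) y)
       + (m z (m x y - m y x) - m (m x y - m y x) z) = 0"
  unfolding diff_left diff_right
    assoc[OF \<open>x \<in> S\<close>] assoc[OF \<open>y \<in> S\<close>] assoc[OF \<open>z \<in> S\<close>]
  by simp

lemma invariant_algebra_zero: "0 \<in> invariant_algebra q"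
  unfolding invariant_algebra_def by simp

lemma invariant_algebra_idem:
  assumes "q * q = q"
  shows "q \<in> invariant_algebra q"
  unfolding invariant_algebra_def using assms by simp

lemma invariant_algebra_add:
  "x \<in> invariant_algebra q \<Longrightarrow> y \<in> invariant_algebra q \<Longrightarrow> x + y \<in> invariant_algebra q"
  and invariant_algebra_diff:
  "x \<in> invariant_algebra q \<Longrightarrow> y \<in> invariant_algebra q \<Longrightarrow> x - y \<in> invariant_algebra q"
  unfolding invariant_algebra_def by (simp_all add: algebra_simps)

lemma invariant_algebra_mult:
  assumes "x \<in> invariant_algebra q" and "y \<in> invariant_algebra q"
  shows "x * y \<in> invariant_algebra q"
proof -
  have x: "q * x * q = q * x" and y: "q * y * q = q * y"
    using assms unfolding invariant_algebra_def by simp_all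
  have "q * (x * y) * q = q * x * q * y * q" using x by (simp add: mult.assoc)
  also have "\<dots> = q * x * q * y" using y by (simp add: mult.assoc)
  also have "\<dots> = q * (x * y)" using x by (simp add: mult.assoc)
  finally show ?thesis unfolding invariant_algebra_def by simp
qed

lemma invariant_algebra_central_mult:
  assumes C: "central C" and x: "x \<in> invariant_algebra q"
  shows "C * x \<in> invariant_algebra q"
proof -
  have Cq: "q * (C * w) = C * (q * w)" for w by (rule central_commute[OF C])
  have "q * (C * x) * q = C * (q * x * q)" by (simp add: Cq mult.assoc)
  also have "\<dots> = C * (q * x)" using x unfolding invariant_algebra_def by simp
  also have "\<dots> = q * (C * x)" by (simp add: Cq)
  finally show ?thesis unfolding invariant_algebra_def by simp
qed

lemma invariant_algebra_deformed_mult: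
  assumes "central K" and "q * q = q"
    and "x \<in> invariant_algebra q" and "y \<in> invariant_algebra q"
  shows "deformed_mult K q x y \<in> invariant_algebra q"
  unfolding deformed_mult_def
  using assms
  by (intro invariant_algebra_add invariant_algebra_diff invariant_algebra_mult
      invariant_algebra_central_mult invariant_algebra_idem)

text \<open>Since scalars act by central elements, the invariant algebra is a subspace.\<close>
lemma invariant_algebra_subspace:
  assumes "assoc_algebra scale"
  shows "module.subspace scale (invariant_algebra q)"
proof -
  interpret vector_space scale
    using assms unfolding assoc_algebra_def by simp
  have "scale c x \<in> invariant_algebra q" if "x \<in> invariant_algebra q" for c x
    unfolding assoc_algebra_scale_eq[OF assms, of c x]
    using assoc_algebra_scale_central[OF assms] that by (rule invariant_algebra_central_mult)
  then show ?thesis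
    unfolding subspace_def by (simp add: invariant_algebra_zero invariant_algebra_add)
qed

theorem proposition1p1:
  fixes scale :: "'k::field \<Rightarrow> 'a::ring_1 \<Rightarrow> 'a"
    and q :: 'a and k :: 'k
  assumes "assoc_algebra scale"
    and "q * q = q"
  shows "lie_algebra_on scale (invariant_algebra q) (bracket6 scale k q)"
proof -
  define m where "m = deformed_mult (scale k 1) q"
  have K: "central (scale k 1)" by (rule assoc_algebra_scale_central[OF assms(1)])
  have module: "module scale"
    using assms(1) unfolding assoc_algebra_def vector_space_def module_def by simp
  have br: "bracket6 scale k q x y = m x y - m y x" for x y
    unfolding m_def by (rule bracket6_eq_commutator[OF assms(1)])
  have scalar: "m (scale c x) y = scale c (m x y)" "m x (scale c y) = scale c (m x y)" for c x y
    unfolding m_def by (rule deformed_mult_scale[OF assms(1)])+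
  have additive: "m (x + y) z = m x z + m y z" "m x (y + z) = m x y + m x z" for x y z
    unfolding m_def by (rule deformed_mult_add_left deformed_mult_add_right)+
  have closed: "m x y \<in> invariant_algebra q"
    if "x \<in> invariant_algebra q" "y \<in> invariant_algebra q" for x y
    unfolding m_def using invariant_algebra_deformed_mult[OF K assms(2)] that .
  have jacobi: "(m x (m y z - m z y) - m (m y z - m z y) x) + (m y (m z x - m x z) - m (m z x - m x z) y)
      + (m z (m x y - m y x) - m (m x y - m y x) z) = 0"
    if "x \<in> invariant_algebra q" "y \<in> invariant_algebra q" "z \<in> invariant_algebra q" for x y z
    unfolding m_def using that
    by (intro commutator_jacobi[where S = "invariant_algebra q"])
      (simp_all add: deformed_mult_diff_left deformed_mult_diff_right
        deformed_mult_assoc[OF K assms(2)])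
  show ?thesis
    unfolding lie_algebra_on_def br
    by (simp add: invariant_algebra_subspace[OF assms(1)] invariant_algebra_diff closed jacobi
        scalar additive module.scale_right_diff_distrib[OF module])
qed

end
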